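(* Consider the system $x^+=f(x,w)$, $y=h(x)+v$ and the FIE described in the context. The FIE is RGAS if the following hold: (a) the system is i-IOSS with $\mathcal{KL}$ bound $\beta(s,t)=c_1s^{a_1}(t+1)^{-b_1}$ for some constants $c_1,a_1,b_1>0$ and all $s,t\ge0$; (b) the infimum in the FIE problem is attained for every $t$ when the cost function is $$V_t(\chi(0)-\bar x_0,\boldsymbol\omega)=l_x(\chi(0)-\bar x_0)(t+1)^{-b_2}+l_{wv}(\boldsymbol\omega,\boldsymbol\nu,t),$$ where $b_2>0$ is a constant, and $l_x$, $l_{wv}$ are continuous and satisfy, for all $x\in\mathbb{R}^n$, $\boldsymbol w\in\mathbb{B}_w$, $\boldsymbol v\in\mathbb{B}_v$, $$c_2|x|^{a_2}\le l_x(x)\le\gamma_x'(|x|),\qquad \underline{\gamma}_w(\|\boldsymbol w\|_{0:t-1})+\underline{\gamma}_v(\|\boldsymbol v\|_{0:t})\le l_{wv}(\boldsymbol w,\boldsymbol v,t)\le\gamma_w(\|\boldsymbol w\|_{0:t-1})+\gamma_v(\|\boldsymbol v\|_{0:t}),$$ with positive constants $c_2,a_2$ and $\underline{\gamma}_w,\underline{\gamma}_v,\gamma_x',\gamma_w,\gamma_v\in\mathcal{K}_\infty$; (c) $\dfrac{a_2}{b_2}\ge\dfrac{a_1}{b_1}$.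
   Context: Notation: $|\cdot|$ is the Euclidean norm; for a sequence $\boldsymbol x=\{x(0),x(1),\dots\}$, $\|\boldsymbol x\|_{a:b}=\max_{a\le i\le b}|x(i)|$. $\mathcal{K}$: continuous, zero at zero, strictly increasing functions $\mathbb{R}_{\ge0}\to\mathbb{R}_{\ge0}$; $\mathcal{K}_\infty$: $\mathcal{K}$-functions tending to $\infty$; $\mathcal{L}$: continuous nonincreasing functions $\mathbb{R}_{\ge0}\to\mathbb{R}_{\ge0}$ tending to $0$; $\mathcal{KL}$: functions $\beta(s,t)$ that are $\mathcal{K}$ in $s$ for each fixed $t$ and $\mathcal{L}$ in $t$ for each fixed $s$. System: $x(t+1)=f(x(t),w(t))$, $y(t)=h(x(t))+v(t)$, with $x\in\mathbb{R}^n$, $w\in\mathbb{R}^g$, $y,v\in\mathbb{R}^p$, $f,h$ continuous and known; the initial state and disturbance sequences $\boldsymbol w,\boldsymbol v$ are unknown but bounded. $x(t;x_0,\boldsymbol w)$ denotes the state at time $t$ from $x(0)=x_0$ under disturbance $\boldsymbol w$. i-IOSS: the system $x^+=f(x,w)$, $y=h(x)$ is i-IOSS (with $\mathcal{KL}$ bound $\beta$) if there exist $\beta\in\mathcal{KL}$, $\alpha_1,\alpha_2\in\mathcal{K}$ such that for all initial states $x_{01},x_{02}$, disturbances $\boldsymbol w_1,\boldsymbol w_2$ and all $t\in\mathbb{I}_{\ge0}$: $|x(t;x_{01},\boldsymbol w_1)-x(t;x_{02},\boldsymbol w_2)|\le\beta(|x_{01}-x_{02}|,t)+\alpha_1(\|\boldsymbol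 w_1-\boldsymbol w_2\|_{0:t-1})+\alpha_2(\|\boldsymbol y_1-\boldsymbol y_2\|_{0:t})$, where $y_j(i)=h(x(i;x_{0j},\boldsymbol w_j))$. FIE: the measurements are $y(i)=h(x(i;x_0,\boldsymbol w))+v(i)$ and $\bar x_0$ is a prior estimate of the initial state. At time $t$ the FIE solves $\inf_{\chi(0),\boldsymbol\omega}V_t(\chi(0)-\bar x_0,\boldsymbol\omega)$ subject to $\chi(i+1)=f(\chi(i),\omega(i))$, $y(i)=h(\chi(i))+\nu(i)$ for $i\in\mathbb{I}_{0:t}$, $\boldsymbol\omega\in\mathbb{B}_w$, $\boldsymbol\nu\in\mathbb{B}_v$, where $\mathbb{B}_w,\mathbb{B}_v$ are given sets of bounded disturbance sequences; $\boldsymbol\nu$ is determined by $\chi(0),\boldsymbol\omega$ and the data. The optimal solution is denoted $(\hat x(0|t),\hat{\boldsymbol w}_t)$. RGAS: the estimate is RGAS if for all $x_0,\bar x_0$ and bounded $(\boldsymbol w,\boldsymbol v)$ there exist $\beta_x\in\mathcal{KL}$ and $\alpha_w,\alpha_v\in\mathcal{K}$ such that for all $t\in\mathbb{I}_{\ge0}$: $|x(t;x_0,\boldsymbol w)-x(t;\hat x(0|t),\hat{\boldsymbol w}_t)|\le\beta_x(|x_0-\bar x_0|,t)+\alpha_w(\|\boldsymbol w\|_{0:t-1})+\alpha_v(\|\boldsymbol v\|_{0:t})$. *)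

theory Defs
  imports "HOL-Analysis.Analysis"
begin

text \<open>Comparison functions on the nonnegative reals (rendered as real functions,
  all conditions imposed on the domain {0..}).\<close>

definition class_K :: "(real \<Rightarrow> real) \<Rightarrow> bool" where
  "class_K g \<longleftrightarrow> continuous_on {0..} g \<and> g 0 = 0 \<and> strict_mono_on {0..} g"

definition class_Kinf :: "(real \<Rightarrow> real) \<Rightarrow> bool" where
  "class_Kinf g \<longleftrightarrow> class_K g \<and> filterlim g at_top at_top"

definition class_L :: "(real \<Rightarrow> real) \<Rightarrow> bool" where
  "class_L g \<longleftrightarrow> continuous_on {0..} g \<and> (\<forall>t\<ge>0. g t \<ge> 0)
     \<and> (\<forall>s t. 0 \<le> s \<longrightarrow> s \<le> t \<longrightarrow> g t \<le> g s) \<and> (g \<longlongrightarrow> 0) at_top"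

definition class_KL :: "(real \<Rightarrow> real \<Rightarrow> real) \<Rightarrow> bool" where
  "class_KL \<beta> \<longleftrightarrow> (\<forall>t\<ge>0. class_K (\<lambda>s. \<beta> s t)) \<and> (\<forall>s\<ge>0. class_L (\<lambda>t. \<beta> s t))"

definition snorm_lt :: "(nat \<Rightarrow> 'a::real_normed_vector) \<Rightarrow> nat \<Rightarrow> real" where
  "snorm_lt x t = Max (insert 0 ((\<lambda>i. norm (x i)) ` {..<t}))"

definition snorm_le :: "(nat \<Rightarrow> 'a::real_normed_vector) \<Rightarrow> nat \<Rightarrow> real" where
  "snorm_le x t = snorm_lt x (Suc t)"

primrec traj :: "('x \<Rightarrow> 'w \<Rightarrow> 'x) \<Rightarrow> 'x \<Rightarrow> (nat \<Rightarrow> 'w) \<Rightarrow> nat \<Rightarrow> 'x" where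
  "traj f x0 w 0 = x0"
| "traj f x0 w (Suc t) = f (traj f x0 w t) (w t)"

definition i_IOSS ::
  "('x::real_normed_vector \<Rightarrow> 'w::real_normed_vector \<Rightarrow> 'x) \<Rightarrow> ('x \<Rightarrow> 'y::real_normed_vector)
    \<Rightarrow> (real \<Rightarrow> real \<Rightarrow> real) \<Rightarrow> bool" where
  "i_IOSS f h \<beta> \<longleftrightarrow> class_KL \<beta> \<and>
    (\<exists>\<alpha>1 \<alpha>2. class_K \<alpha>1 \<and> class_K \<alpha>2 \<and>
      (\<forall>x01 x02 w1 w2 t.
         norm (traj f x01 w1 t - traj f x02 w2 t)
           \<le> \<beta> (norm (x01 - x02)) (real t)
             + \<alpha>1 (snorm_lt (\<lambda>i. w1 i - w2 i) t)
             + \<alpha>2 (snorm_le (\<lambda>i. h (traj f x01 w1 i) - h (traj f x02 w2 i)) t)))"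

definition FIE_feasible ::
  "('x \<Rightarrow> 'w \<Rightarrow> 'x) \<Rightarrow> ('x \<Rightarrow> 'y::ab_group_add) \<Rightarrow> (nat \<Rightarrow> 'w) set \<Rightarrow> (nat \<Rightarrow> 'y) set
    \<Rightarrow> (nat \<Rightarrow> 'y) \<Rightarrow> nat \<Rightarrow> 'x \<Rightarrow> (nat \<Rightarrow> 'w) \<Rightarrow> (nat \<Rightarrow> 'y) \<Rightarrow> bool" where
  "FIE_feasible f h Bw Bv y t \<chi>0 \<omega> \<nu> \<longleftrightarrow>
     \<omega> \<in> Bw \<and> \<nu> \<in> Bv \<and> (\<forall>i\<le>t. y i = h (traj f \<chi>0 \<omega> i) + \<nu> i)"

definition FIE_opt ::
  "('x::ab_group_add \<Rightarrow> 'w \<Rightarrow> 'x) \<Rightarrow> ('x \<Rightarrow> 'y::ab_group_add) \<Rightarrow> (nat \<Rightarrow> 'w) set \<Rightarrow> (nat \<Rightarrow> 'y) set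
    \<Rightarrow> (nat \<Rightarrow> 'x \<Rightarrow> (nat \<Rightarrow> 'w) \<Rightarrow> (nat \<Rightarrow> 'y) \<Rightarrow> real)
    \<Rightarrow> 'x \<Rightarrow> (nat \<Rightarrow> 'y) \<Rightarrow> nat \<Rightarrow> 'x \<Rightarrow> (nat \<Rightarrow> 'w) \<Rightarrow> (nat \<Rightarrow> 'y) \<Rightarrow> bool" where
  "FIE_opt f h Bw Bv V xbar0 y t \<chi>0 \<omega> \<nu> \<longleftrightarrow>
     FIE_feasible f h Bw Bv y t \<chi>0 \<omega> \<nu> \<and>
     (\<forall>\<chi>0' \<omega>' \<nu>'. FIE_feasible f h Bw Bv y t \<chi>0' \<omega>' \<nu>' \<longrightarrow>
        V t (\<chi>0 - xbar0) \<omega> \<nu> \<le> V t (\<chi>0' - xbar0) \<omega>' \<nu>')"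

end

theory Submission
  imports Defs
begin

text \<open>The optimal cost is at most the cost of the true initial state and disturbances, which
  the upper bounds on \<open>l\<^sub>x\<close> and \<open>l\<^sub>w\<^sub>v\<close> turn into
  \<open>\<gamma>\<^sub>x'(|x0 - xbar0|) (t+1)\<^sup>-\<^sup>b\<^sup>2 + \<gamma>\<^sub>w(\<parallel>w\<parallel>) + \<gamma>\<^sub>v(\<parallel>v\<parallel>)\<close>.
  The lower bounds then control the estimated disturbances (through the inverses of the lower
  \<open>\<K>\<^sub>\<infinity>\<close> bounds) and the initial estimation error \<open>e\<close> (through
  \<open>c\<^sub>2 e\<^sup>a\<^sup>2 (t+1)\<^sup>-\<^sup>b\<^sup>2\<close>). Comparing the true and the estimated trajectory by
  i-IOSS, the initial-state term \<open>c\<^sub>1 |x\<^sub>0 - \<chi>\<^sub>0|\<^sup>a\<^sup>1 (t+1)\<^sup>-\<^sup>b\<^sup>1\<close> is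
  bounded by raising the cost bound to the power \<open>a\<^sub>1/a\<^sub>2\<close>; the growing factor
  \<open>(t+1)\<^sup>b\<^sup>2\<^sup>a\<^sup>1\<^sup>/\<^sup>a\<^sup>2\<close> this produces is absorbed by \<open>(t+1)\<^sup>-\<^sup>b\<^sup>1\<close>
  precisely because \<open>a\<^sub>2/b\<^sub>2 \<ge> a\<^sub>1/b\<^sub>1\<close>.\<close>

lemma class_K_nonneg: "class_K g \<Longrightarrow> 0 \<le> s \<Longrightarrow> 0 \<le> g s"
  unfolding class_K_def by (metis atLeast_iff order_refl strict_mono_on_leD)

lemma class_K_mono: "class_K g \<Longrightarrow> 0 \<le> a \<Longrightarrow> a \<le> b \<Longrightarrow> g a \<le> g b"
  unfolding class_K_def by (meson atLeast_iff order_trans strict_mono_on_leD)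

lemma class_K_less: "class_K g \<Longrightarrow> 0 \<le> a \<Longrightarrow> a < b \<Longrightarrow> g a < g b"
  unfolding class_K_def by (meson atLeast_iff less_imp_le order_trans strict_mono_onD)

lemma class_K_inj: "class_K g \<Longrightarrow> 0 \<le> a \<Longrightarrow> 0 \<le> b \<Longrightarrow> g a = g b \<Longrightarrow> a = b"
  by (metis class_K_less linorder_neq_iff order_less_irrefl)

lemma class_K_id: "class_K (\<lambda>s. s)"
  unfolding class_K_def by (auto intro: strict_mono_onI)

lemma class_K_compose:
  assumes "class_K f" "class_K g" shows "class_K (\<lambda>s. f (g s))"
proof -
  have "g ` {0..} \<subseteq> {0..}" using class_K_nonneg[OF assms(2)] by auto
  then have "continuous_on {0..} (\<lambda>s. f (g s))"
    using assms unfolding class_K_def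
    by (auto intro: continuous_on_compose2[of "{0..}" f "{0..}" g])
  moreover have "strict_mono_on {0..} (\<lambda>s. f (g s))"
    by (rule strict_mono_onI) (metis class_K_less class_K_nonneg assms atLeast_iff)
  ultimately show ?thesis using assms unfolding class_K_def by auto
qed

lemma class_K_add:
  assumes "class_K f" "class_K g" shows "class_K (\<lambda>s. f s + g s)"
proof -
  have "strict_mono_on {0..} (\<lambda>s. f s + g s)"
    by (rule strict_mono_onI) (metis class_K_less add_strict_mono assms atLeast_iff)
  then show ?thesis using assms unfolding class_K_def by (auto intro: continuous_intros)
qed

lemma class_K_cmult:
  assumes "class_K f" "c > 0" shows "class_K (\<lambda>s. c * f s)"
proof -
  have "strict_mono_on {0..} (\<lambda>s. c * f s)"
    by (rule strict_mono_onI) (simp add: class_K_less assms)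
  then show ?thesis using assms unfolding class_K_def by (auto intro: continuous_intros)
qed

lemma class_K_powr: assumes "p > 0" shows "class_K (\<lambda>s. s powr p)"
proof -
  have "continuous_on {0..} (\<lambda>s::real. s powr p)"
    by (rule continuous_on_powr') (use assms in \<open>auto intro: continuous_intros\<close>)
  moreover have "strict_mono_on {0..} (\<lambda>s::real. s powr p)"
    by (rule strict_mono_onI) (use assms in \<open>auto intro: powr_less_mono2\<close>)
  ultimately show ?thesis unfolding class_K_def by simp
qed

text \<open>A sum of \<open>n\<close> nonnegative terms is at most \<open>n\<close> times its largest term.\<close>

lemma class_K_sum_list_le:
  assumes g: "class_K g" and nonneg: "\<forall>x\<in>set xs. 0 \<le> x"
  shows "g (sum_list xs) \<le> (\<Sum>x\<leftarrow>xs. g (real (length xs) * x))"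
proof (cases "xs = []")
  case True
  then show ?thesis using g by (simp add: class_K_def)
next
  case False
  define m where "m = Max (set xs)"
  have m: "m \<in> set xs" unfolding m_def using False by simp
  have "sum_list xs \<le> (\<Sum>x\<leftarrow>xs. m)"
    using sum_list_mono[of xs "\<lambda>x. x" "\<lambda>_. m"] by (simp add: m_def)
  then have "g (sum_list xs) \<le> g (real (length xs) * m)"
    using nonneg by (intro class_K_mono[OF g]) (auto simp: sum_list_nonneg sum_list_triv)
  also have "\<dots> \<le> (\<Sum>x\<leftarrow>xs. g (real (length xs) * x))"
    using m nonneg by (intro member_le_sum_list) (auto intro: class_K_nonneg[OF g])
  finally show ?thesis .
qed

lemma class_K_add_le:
  "class_K g \<Longrightarrow> 0 \<le> a \<Longrightarrow> 0 \<le> b \<Longrightarrow> g (a + b) \<le> g (2 * a) + g (2 * b)"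
  using class_K_sum_list_le[of g "[a, b]"] by simp

lemma class_K_add3_le:
  "class_K g \<Longrightarrow> 0 \<le> a \<Longrightarrow> 0 \<le> b \<Longrightarrow> 0 \<le> c \<Longrightarrow>
    g (a + b + c) \<le> g (3 * a) + g (3 * b) + g (3 * c)"
  using class_K_sum_list_le[of g "[a, b, c]"] by (simp add: add.assoc)

lemma class_Kinf_surj:
  assumes "class_Kinf g" "0 \<le> r" shows "\<exists>s\<ge>0. g s = r"
proof -
  from assms(1) have lim: "filterlim g at_top at_top" and K: "class_K g"
    unfolding class_Kinf_def by auto
  then obtain N where N: "\<And>x. x \<ge> N \<Longrightarrow> r \<le> g x"
    by (auto simp: filterlim_at_top eventually_at_top_linorder)
  have "continuous_on {0..max N 0} g"
    using K unfolding class_K_def by (auto intro: continuous_on_subset)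
  moreover have "g 0 \<le> r" "r \<le> g (max N 0)" using K assms(2) N unfolding class_K_def by auto
  ultimately obtain s where "0 \<le> s" "g s = r"
    using IVT'[of g 0 r "max N 0"] by auto
  then show ?thesis by auto
qed

definition Kinv :: "(real \<Rightarrow> real) \<Rightarrow> real \<Rightarrow> real" where
  "Kinv g r = (THE s. 0 \<le> s \<and> g s = r)"

lemma Kinv:
  assumes "class_Kinf g" "0 \<le> r" shows "0 \<le> Kinv g r" "g (Kinv g r) = r"
proof -
  have K: "class_K g" using assms(1) unfolding class_Kinf_def by auto
  obtain s where s: "0 \<le> s" "g s = r" using class_Kinf_surj[OF assms] by auto
  have "\<exists>!s. 0 \<le> s \<and> g s = r" using s class_K_inj[OF K] by blast
  then have "0 \<le> Kinv g r \<and> g (Kinv g r) = r" unfolding Kinv_def by (rule theI')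
  then show "0 \<le> Kinv g r" "g (Kinv g r) = r" by auto
qed

lemma Kinv_apply:
  assumes "class_Kinf g" "0 \<le> s" shows "Kinv g (g s) = s"
proof -
  have K: "class_K g" using assms(1) unfolding class_Kinf_def by auto
  show ?thesis
    using Kinv[OF assms(1) class_K_nonneg[OF K assms(2)]] class_K_inj[OF K] assms(2) by auto
qed

lemma Kinv_ge:
  assumes "class_Kinf g" "0 \<le> s" "g s \<le> r" shows "s \<le> Kinv g r"
proof (rule ccontr)
  have K: "class_K g" using assms(1) unfolding class_Kinf_def by auto
  have r: "0 \<le> r" using class_K_nonneg[OF K assms(2)] assms(3) by auto
  assume "\<not> s \<le> Kinv g r"
  then have "g (Kinv g r) < g s" using class_K_less[OF K, of "Kinv g r" s] Kinv[OF assms(1) r] by auto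
  then show False using Kinv[OF assms(1) r] assms(3) by auto
qed

lemma class_K_image_interval:
  assumes "class_K g" "0 \<le> N" shows "g ` {0..N} = {0..g N}"
proof
  show "g ` {0..N} \<subseteq> {0..g N}" using class_K_nonneg[OF assms(1)] class_K_mono[OF assms(1)] by auto
  show "{0..g N} \<subseteq> g ` {0..N}"
  proof
    fix y assume y: "y \<in> {0..g N}"
    have "continuous_on {0..N} g"
      using assms(1) unfolding class_K_def by (auto intro: continuous_on_subset)
    moreover have "g 0 \<le> y" using assms(1) y unfolding class_K_def by auto
    ultimately obtain x where "0 \<le> x" "x \<le> N" "g x = y"
      using IVT'[of g 0 y N] y assms(2) by auto
    then show "y \<in> g ` {0..N}" by auto
  qed
qed

text \<open>Continuity of the inverse is local: near \<open>r\<close> it is the inverse of the restriction of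
  \<open>g\<close> to a compact interval \<open>[0, N]\<close> with \<open>g N > r\<close>.\<close>

lemma class_K_Kinv:
  assumes "class_Kinf g" shows "class_K (Kinv g)"
proof -
  have K: "class_K g" using assms(1) unfolding class_Kinf_def by auto
  have "strict_mono_on {0..} (Kinv g)"
  proof (rule strict_mono_onI)
    fix r1 r2 :: real assume r: "r1 \<in> {0..}" "r2 \<in> {0..}" "r1 < r2"
    then show "Kinv g r1 < Kinv g r2"
      using class_K_mono[OF K, of "Kinv g r2" "Kinv g r1"] Kinv[OF assms] by force
  qed
  moreover have "continuous (at r within {0..}) (Kinv g)" if r: "0 \<le> r" for r
  proof -
    obtain N where N: "0 \<le> N" "g N = r + 1" using class_Kinf_surj[OF assms, of "r + 1"] r by auto
    have "continuous_on (g ` {0..N}) (Kinv g)"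
      using K Kinv_apply[OF assms]
      by (intro continuous_on_inv) (auto simp: class_K_def intro: continuous_on_subset)
    then have "continuous (at r within {0..g N}) (Kinv g)"
      using r N by (simp add: class_K_image_interval[OF K N(1)] continuous_on_eq_continuous_within)
    moreover have "at r within {0..} = at r within {0..g N}"
      by (rule at_within_nhd[where S="{..<g N}"]) (use r N in auto)
    ultimately show ?thesis by simp
  qed
  then have "continuous_on {0..} (Kinv g)"
    by (simp add: continuous_on_eq_continuous_within)
  moreover have "Kinv g 0 = 0" using Kinv_apply[OF assms, of 0] K unfolding class_K_def by auto
  ultimately show ?thesis unfolding class_K_def by simp
qed

lemma class_KL_add:
  assumes "class_KL \<beta>1" "class_KL \<beta>2" shows "class_KL (\<lambda>s t. \<beta>1 s t + \<beta>2 s t)"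
  using assms unfolding class_KL_def class_L_def
  by (auto intro!: class_K_add continuous_intros add_mono simp: tendsto_add_zero)

lemma class_KL_polynomial_decay:
  assumes \<alpha>: "class_K \<alpha>" and \<phi>: "class_K \<phi>" and b: "b > 0"
  shows "class_KL (\<lambda>s t. \<alpha> (\<phi> s * (t + 1) powr (- b)))"
  unfolding class_KL_def
proof (intro conjI allI impI)
  fix t :: real assume "0 \<le> t"
  then have "class_K (\<lambda>s. (t + 1) powr (- b) * \<phi> s)" using class_K_cmult[OF \<phi>] by simp
  from class_K_compose[OF \<alpha> this] show "class_K (\<lambda>s. \<alpha> (\<phi> s * (t + 1) powr - b))"
    by (simp add: mult.commute)
next
  fix s :: real assume "0 \<le> s"
  then have \<phi>s: "0 \<le> \<phi> s" using class_K_nonneg[OF \<phi>] by simp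
  have \<alpha>_cont: "continuous_on {0..} \<alpha>" using \<alpha> unfolding class_K_def by simp
  have "continuous_on {0..} (\<lambda>t. \<alpha> (\<phi> s * (t + 1) powr - b))"
    by (rule continuous_on_compose2[OF \<alpha>_cont]) (use \<phi>s in \<open>auto intro!: continuous_intros\<close>)
  moreover have "\<forall>t\<ge>0. 0 \<le> \<alpha> (\<phi> s * (t + 1) powr - b)"
    using class_K_nonneg[OF \<alpha>] \<phi>s by auto
  moreover have "\<alpha> (\<phi> s * (t2 + 1) powr - b) \<le> \<alpha> (\<phi> s * (t1 + 1) powr - b)"
    if "0 \<le> t1" "t1 \<le> t2" for t1 t2 :: real
  proof -
    have "(t2 + 1) powr - b \<le> (t1 + 1) powr - b" using that b by (intro powr_mono2') auto
    then show ?thesis using \<phi>s that by (intro class_K_mono[OF \<alpha>]) (auto intro: mult_left_mono)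
  qed
  moreover have "((\<lambda>t. \<alpha> (\<phi> s * (t + 1) powr - b)) \<longlongrightarrow> 0) at_top"
  proof -
    have "((\<lambda>t::real. (t + 1) powr - b) \<longlongrightarrow> 0) at_top"
      by (rule tendsto_neg_powr) (use b filterlim_tendsto_add_at_top[OF tendsto_const filterlim_ident, of 1]
          in \<open>auto simp: add.commute\<close>)
    then have decay: "((\<lambda>t::real. \<phi> s * (t + 1) powr - b) \<longlongrightarrow> 0) at_top"
      by (rule tendsto_mult_right_zero)
    have "continuous (at 0 within {0..}) \<alpha>"
      using \<alpha>_cont by (simp add: continuous_on_eq_continuous_within)
    then have "((\<lambda>t. \<alpha> (\<phi> s * (t + 1) powr - b)) \<longlongrightarrow> \<alpha> 0) at_top"
      by (rule continuous_within_tendsto_compose[OF _ _ decay])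
         (use \<phi>s in \<open>auto simp: eventually_at_top_linorder intro!: exI[of _ 0]\<close>)
    then show ?thesis using \<alpha> unfolding class_K_def by simp
  qed
  ultimately show "class_L (\<lambda>t. \<alpha> (\<phi> s * (t + 1) powr - b))"
    unfolding class_L_def by blast
qed

lemma snorm_lt_nonneg: "0 \<le> snorm_lt x t"
  unfolding snorm_lt_def by (rule Max_ge_iff[THEN iffD2]) auto

lemma norm_le_snorm_lt: "i < t \<Longrightarrow> norm (x i) \<le> snorm_lt x t"
  unfolding snorm_lt_def by (rule Max_ge_iff[THEN iffD2]) auto

lemma snorm_lt_le: "0 \<le> B \<Longrightarrow> (\<And>i. i < t \<Longrightarrow> norm (x i) \<le> B) \<Longrightarrow> snorm_lt x t \<le> B"
  unfolding snorm_lt_def by (subst Max_le_iff) auto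

lemma snorm_lt_diff_le: "snorm_lt (\<lambda>i. x i - y i) t \<le> snorm_lt x t + snorm_lt y t"
proof (rule snorm_lt_le)
  show "0 \<le> snorm_lt x t + snorm_lt y t" by (simp add: snorm_lt_nonneg)
  show "norm (x i - y i) \<le> snorm_lt x t + snorm_lt y t" if "i < t" for i
    using norm_triangle_ineq4[of "x i" "y i"] norm_le_snorm_lt[OF that, of x]
      norm_le_snorm_lt[OF that, of y] by linarith
qed

lemma snorm_le_nonneg: "0 \<le> snorm_le x t"
  unfolding snorm_le_def by (rule snorm_lt_nonneg)

lemma snorm_le_cong: "(\<And>i. i \<le> t \<Longrightarrow> x i = y i) \<Longrightarrow> snorm_le x t = snorm_le y t"
  unfolding snorm_le_def snorm_lt_def
  by (auto simp: less_Suc_eq_le intro!: arg_cong[where f=Max] image_cong)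

lemma snorm_le_diff_le: "snorm_le (\<lambda>i. x i - y i) t \<le> snorm_le x t + snorm_le y t"
  unfolding snorm_le_def by (rule snorm_lt_diff_le)

lemma powr_decay_transfer:
  fixes c a1 a2 b1 b2 T e X G :: real
  assumes pos: "c > 0" "a1 > 0" "a2 > 0" and ratio: "a1 * b2 \<le> a2 * b1"
    and T: "1 \<le> T" and nonneg: "0 \<le> e" "0 \<le> X" "0 \<le> G"
    and cost: "c * e powr a2 * T powr (- b2) \<le> X * T powr (- b2) + G"
  shows "e powr a1 * T powr (- b1)
    \<le> (2 / c) powr (a1 / a2) * (X powr (a1 / a2) * T powr (- b1) + G powr (a1 / a2))"
proof -
  define \<rho> where "\<rho> = a1 / a2"
  have \<rho>: "\<rho> > 0" unfolding \<rho>_def using pos by simp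
  have inv: "T powr (- b2) * T powr b2 = 1" using T by (simp flip: powr_add)
  have "c * e powr a2 = c * e powr a2 * T powr (- b2) * T powr b2" using inv by simp
  also have "\<dots> \<le> (X * T powr (- b2) + G) * T powr b2" using cost by (simp add: mult_right_mono)
  also have "\<dots> = X + G * T powr b2" using inv by (simp add: algebra_simps)
  finally have "c * e powr a2 \<le> X + G * T powr b2" .
  then have "e powr a2 \<le> X / c + G * T powr b2 / c"
    using pos by (simp add: field_simps)
  moreover have "e powr a1 = (e powr a2) powr \<rho>" using pos by (simp add: \<rho>_def powr_powr)
  ultimately have "e powr a1 \<le> (X / c + G * T powr b2 / c) powr \<rho>"
    using \<rho> by (simp add: powr_mono2)
  also have "\<dots> \<le> (2 * (X / c)) powr \<rho> + (2 * (G * T powr b2 / c)) powr \<rho>"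
    using nonneg pos by (intro class_K_add_le[OF class_K_powr[OF \<rho>]]) auto
  also have "\<dots> = (2 / c) powr \<rho> * (X powr \<rho> + G powr \<rho> * T powr (b2 * \<rho>))"
    using nonneg pos T by (simp add: powr_mult powr_divide powr_powr field_simps)
  finally have e: "e powr a1 \<le> (2 / c) powr \<rho> * (X powr \<rho> + G powr \<rho> * T powr (b2 * \<rho>))" .
  have "T powr (b2 * \<rho>) * T powr (- b1) = T powr (b2 * \<rho> - b1)"
    by (simp flip: powr_add)
  also have "\<dots> \<le> T powr 0"
    using T ratio pos by (intro powr_mono) (auto simp: \<rho>_def field_simps)
  also have "\<dots> = 1" using T by simp
  finally have decay: "T powr (b2 * \<rho>) * T powr (- b1) \<le> 1" .
  have "e powr a1 * T powr (- b1)
      \<le> (2 / c) powr \<rho> * (X powr \<rho> * T powr (- b1) + G powr \<rho> * (T powr (b2 * \<rho>) * T powr (- b1)))"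
    using mult_right_mono[OF e, of "T powr (- b1)"] by (simp add: algebra_simps)
  also have "\<dots> \<le> (2 / c) powr \<rho> * (X powr \<rho> * T powr (- b1) + G powr \<rho>)"
    using decay by (intro mult_left_mono add_left_mono mult_left_le) auto
  finally show ?thesis unfolding \<rho>_def .
qed

locale FIE_power_decay =
  fixes f :: "'x::real_normed_vector \<Rightarrow> 'w::real_normed_vector \<Rightarrow> 'x"
    and h :: "'x \<Rightarrow> 'y::real_normed_vector"
    and Bw :: "(nat \<Rightarrow> 'w) set" and Bv :: "(nat \<Rightarrow> 'y) set"
    and l_x :: "'x \<Rightarrow> real"
    and l_wv :: "(nat \<Rightarrow> 'w) \<Rightarrow> (nat \<Rightarrow> 'y) \<Rightarrow> nat \<Rightarrow> real"
    and c1 a1 b1 c2 a2 b2 :: real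
    and \<gamma>w_low \<gamma>v_low \<gamma>x' \<gamma>w \<gamma>v \<alpha>1 \<alpha>2 :: "real \<Rightarrow> real"
  assumes pos: "c1 > 0" "a1 > 0" "b1 > 0" "c2 > 0" "a2 > 0" "b2 > 0"
    and ratio: "a1 * b2 \<le> a2 * b1"
    and ioss_bound: "\<And>x01 x02 w1 w2 t. norm (traj f x01 w1 t - traj f x02 w2 t)
          \<le> c1 * norm (x01 - x02) powr a1 * (real t + 1) powr (- b1)
            + \<alpha>1 (snorm_lt (\<lambda>i. w1 i - w2 i) t)
            + \<alpha>2 (snorm_le (\<lambda>i. h (traj f x01 w1 i) - h (traj f x02 w2 i)) t)"
    and K_\<alpha>: "class_K \<alpha>1" "class_K \<alpha>2"
    and Kinf_low: "class_Kinf \<gamma>w_low" "class_Kinf \<gamma>v_low"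
    and K_up: "class_K \<gamma>x'" "class_K \<gamma>w" "class_K \<gamma>v"
    and lx_bounds: "\<And>x. c2 * norm x powr a2 \<le> l_x x \<and> l_x x \<le> \<gamma>x' (norm x)"
    and lwv_bounds: "\<And>w v t. w \<in> Bw \<Longrightarrow> v \<in> Bv \<Longrightarrow>
          \<gamma>w_low (snorm_lt w t) + \<gamma>v_low (snorm_le v t) \<le> l_wv w v t \<and>
          l_wv w v t \<le> \<gamma>w (snorm_lt w t) + \<gamma>v (snorm_le v t)"
begin

abbreviation FIE_cost :: "nat \<Rightarrow> 'x \<Rightarrow> (nat \<Rightarrow> 'w) \<Rightarrow> (nat \<Rightarrow> 'y) \<Rightarrow> real" where
  "FIE_cost \<equiv> \<lambda>t e \<omega> \<nu>. l_x e * (real t + 1) powr (- b2) + l_wv \<omega> \<nu> t"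

abbreviation \<rho> :: real where "\<rho> \<equiv> a1 / a2"

abbreviation \<kappa> :: real where "\<kappa> \<equiv> c1 * 2 powr a1 * (2 / c2) powr \<rho>"

definition disturbance_gain :: "real \<Rightarrow> real" where
  "disturbance_gain s = \<alpha>1 (2 * Kinv \<gamma>w_low (3 * s)) + \<alpha>2 (2 * Kinv \<gamma>v_low (3 * s))"

definition state_gain :: "real \<Rightarrow> real \<Rightarrow> real" where
  "state_gain s t = (c1 * (2 * s) powr a1 + \<kappa> * \<gamma>x' s powr \<rho>) * (t + 1) powr (- b1)
     + disturbance_gain (\<gamma>x' s * (t + 1) powr (- b2))"

definition input_gain :: "real \<Rightarrow> real" where
  "input_gain s = \<kappa> * (2 * \<gamma>w s) powr \<rho> + \<alpha>1 (2 * s) + disturbance_gain (\<gamma>w s)"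

definition noise_gain :: "real \<Rightarrow> real" where
  "noise_gain s = \<kappa> * (2 * \<gamma>v s) powr \<rho> + \<alpha>2 (2 * s) + disturbance_gain (\<gamma>v s)"

lemma \<kappa>_pos: "\<kappa> > 0"
  using pos by simp

lemma class_K_disturbance_gain: "class_K disturbance_gain"
proof -
  have "class_K (\<lambda>s. 2 * Kinv g (3 * s))" if "class_Kinf g" for g
    by (intro class_K_cmult class_K_compose[OF class_K_Kinv] class_K_id that) auto
  then show ?thesis
    unfolding disturbance_gain_def
    using Kinf_low by (intro class_K_add class_K_compose[OF K_\<alpha>(1)] class_K_compose[OF K_\<alpha>(2)]) auto
qed

lemma class_KL_state_gain: "class_KL state_gain"
proof -
  have "class_K (\<lambda>s. c1 * (2 * s) powr a1 + \<kappa> * \<gamma>x' s powr \<rho>)"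
    using pos \<kappa>_pos
    by (intro class_K_add class_K_cmult class_K_compose[OF class_K_powr] K_up class_K_id) auto
  from class_KL_polynomial_decay[OF class_K_id this, of b1] class_KL_polynomial_decay[OF class_K_disturbance_gain K_up(1), of b2]
  show ?thesis
    unfolding state_gain_def using pos by (intro class_KL_add) auto
qed

lemma class_K_input_gain: "class_K input_gain"
  unfolding input_gain_def using pos \<kappa>_pos
  by (intro class_K_add class_K_cmult class_K_compose[OF class_K_powr] class_K_compose[OF K_\<alpha>(1)]
      class_K_compose[OF class_K_disturbance_gain] K_up class_K_id) auto

lemma class_K_noise_gain: "class_K noise_gain"
  unfolding noise_gain_def using pos \<kappa>_pos
  by (intro class_K_add class_K_cmult class_K_compose[OF class_K_powr] class_K_compose[OF K_\<alpha>(2)]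
      class_K_compose[OF class_K_disturbance_gain] K_up class_K_id) auto

context
  fixes x0 xbar0 :: 'x and w :: "nat \<Rightarrow> 'w" and v :: "nat \<Rightarrow> 'y"
    and t :: nat and \<chi>0 :: 'x and \<omega> :: "nat \<Rightarrow> 'w" and \<nu> :: "nat \<Rightarrow> 'y"
  assumes w: "w \<in> Bw" and v: "v \<in> Bv"
    and opt: "FIE_opt f h Bw Bv FIE_cost xbar0 (\<lambda>i. h (traj f x0 w i) + v i) t \<chi>0 \<omega> \<nu>"
begin

abbreviation decay :: "real \<Rightarrow> real" where "decay b \<equiv> (real t + 1) powr (- b)"

abbreviation cost_bound :: real where
  "cost_bound \<equiv> \<gamma>x' (norm (x0 - xbar0)) * decay b2 + \<gamma>w (snorm_lt w t) + \<gamma>v (snorm_le v t)"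

lemma optimal_cost_le:
  "c2 * norm (\<chi>0 - xbar0) powr a2 * decay b2 + \<gamma>w_low (snorm_lt \<omega> t) + \<gamma>v_low (snorm_le \<nu> t)
    \<le> cost_bound"
proof -
  have feasible: "\<omega> \<in> Bw" "\<nu> \<in> Bv"
    using opt unfolding FIE_opt_def FIE_feasible_def by auto
  have "FIE_feasible f h Bw Bv (\<lambda>i. h (traj f x0 w i) + v i) t x0 w v"
    unfolding FIE_feasible_def using w v by auto
  then have "FIE_cost t (\<chi>0 - xbar0) \<omega> \<nu> \<le> FIE_cost t (x0 - xbar0) w v"
    using opt unfolding FIE_opt_def by blast
  moreover have "c2 * norm (\<chi>0 - xbar0) powr a2 * decay b2 \<le> l_x (\<chi>0 - xbar0) * decay b2"
    "l_x (x0 - xbar0) * decay b2 \<le> \<gamma>x' (norm (x0 - xbar0)) * decay b2"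
    using lx_bounds by (auto intro: mult_right_mono)
  moreover have "\<gamma>w_low (snorm_lt \<omega> t) + \<gamma>v_low (snorm_le \<nu> t) \<le> l_wv \<omega> \<nu> t"
    "l_wv w v t \<le> \<gamma>w (snorm_lt w t) + \<gamma>v (snorm_le v t)"
    using lwv_bounds feasible w v by auto
  ultimately show ?thesis by linarith
qed

lemma optimal_disturbances_le:
  "\<gamma>w_low (snorm_lt \<omega> t) \<le> cost_bound" "\<gamma>v_low (snorm_le \<nu> t) \<le> cost_bound"
proof -
  have "0 \<le> c2 * norm (\<chi>0 - xbar0) powr a2 * decay b2" using pos by simp
  moreover have "0 \<le> \<gamma>w_low (snorm_lt \<omega> t)" "0 \<le> \<gamma>v_low (snorm_le \<nu> t)"
    using Kinf_low by (auto simp: class_Kinf_def class_K_nonneg snorm_lt_nonneg snorm_le_nonneg)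
  ultimately show "\<gamma>w_low (snorm_lt \<omega> t) \<le> cost_bound" "\<gamma>v_low (snorm_le \<nu> t) \<le> cost_bound"
    using optimal_cost_le by linarith+
qed

lemma input_error_le: "snorm_lt (\<lambda>i. w i - \<omega> i) t \<le> snorm_lt w t + Kinv \<gamma>w_low cost_bound"
proof -
  have "snorm_lt \<omega> t \<le> Kinv \<gamma>w_low cost_bound"
    by (rule Kinv_ge[OF Kinf_low(1) snorm_lt_nonneg optimal_disturbances_le(1)])
  then show ?thesis using snorm_lt_diff_le[of w \<omega> t] by linarith
qed

lemma output_error_le:
  "snorm_le (\<lambda>i. h (traj f x0 w i) - h (traj f \<chi>0 \<omega> i)) t \<le> snorm_le v t + Kinv \<gamma>v_low cost_bound"
proof -
  have "snorm_le \<nu> t \<le> Kinv \<gamma>v_low cost_bound"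
    by (rule Kinv_ge[OF Kinf_low(2) snorm_le_nonneg optimal_disturbances_le(2)])
  moreover have "h (traj f x0 w i) - h (traj f \<chi>0 \<omega> i) = \<nu> i - v i" if "i \<le> t" for i
  proof -
    have "h (traj f x0 w i) + v i = h (traj f \<chi>0 \<omega> i) + \<nu> i"
      using opt that unfolding FIE_opt_def FIE_feasible_def by blast
    then show ?thesis by (simp add: algebra_simps eq_diff_eq)
  qed
  then have "snorm_le (\<lambda>i. h (traj f x0 w i) - h (traj f \<chi>0 \<omega> i)) t = snorm_le (\<lambda>i. \<nu> i - v i) t"
    by (rule snorm_le_cong)
  ultimately show ?thesis using snorm_le_diff_le[of \<nu> v t] by linarith
qed

lemma initial_error_le:
  "c1 * norm (x0 - \<chi>0) powr a1 * decay b1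
    \<le> c1 * (2 * norm (x0 - xbar0)) powr a1 * decay b1
      + \<kappa> * (\<gamma>x' (norm (x0 - xbar0)) powr \<rho> * decay b1
               + (2 * \<gamma>w (snorm_lt w t)) powr \<rho> + (2 * \<gamma>v (snorm_le v t)) powr \<rho>)"
proof -
  define E e where "E = norm (x0 - xbar0)" and "e = norm (\<chi>0 - xbar0)"
  define W V where "W = \<gamma>w (snorm_lt w t)" and "V = \<gamma>v (snorm_le v t)"
  have W: "0 \<le> W" and V: "0 \<le> V"
    unfolding W_def V_def using K_up by (auto simp: class_K_nonneg snorm_lt_nonneg snorm_le_nonneg)
  have X: "0 \<le> \<gamma>x' E" using K_up class_K_nonneg unfolding E_def by auto
  have "0 \<le> \<gamma>w_low (snorm_lt \<omega> t)" "0 \<le> \<gamma>v_low (snorm_le \<nu> t)"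
    using Kinf_low by (auto simp: class_Kinf_def class_K_nonneg snorm_lt_nonneg snorm_le_nonneg)
  then have "c2 * e powr a2 * decay b2 \<le> \<gamma>x' E * decay b2 + (W + V)"
    using optimal_cost_le unfolding E_def e_def W_def V_def by linarith
  then have e_decay: "e powr a1 * decay b1 \<le> (2 / c2) powr \<rho> * (\<gamma>x' E powr \<rho> * decay b1 + (W + V) powr \<rho>)"
    using pos ratio X W V unfolding e_def by (intro powr_decay_transfer) auto
  have "(W + V) powr \<rho> \<le> (2 * W) powr \<rho> + (2 * V) powr \<rho>"
    using pos W V by (intro class_K_add_le[OF class_K_powr]) auto
  with e_decay have e_term: "c1 * 2 powr a1 * e powr a1 * decay b1
      \<le> \<kappa> * (\<gamma>x' E powr \<rho> * decay b1 + (2 * W) powr \<rho> + (2 * V) powr \<rho>)"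
    using pos by (auto simp: mult.assoc intro!: mult_left_mono elim!: order.trans)
  have "norm (x0 - \<chi>0) \<le> E + e"
    unfolding E_def e_def using norm_triangle_ineq4[of "x0 - xbar0" "\<chi>0 - xbar0"] by simp
  then have "norm (x0 - \<chi>0) powr a1 \<le> (E + e) powr a1"
    using pos by (intro powr_mono2) auto
  also have "\<dots> \<le> (2 * E) powr a1 + 2 powr a1 * e powr a1"
    using class_K_add_le[OF class_K_powr[of a1], of E e] pos
    by (simp add: E_def e_def powr_mult)
  finally have "c1 * norm (x0 - \<chi>0) powr a1 * decay b1
      \<le> c1 * ((2 * E) powr a1 + 2 powr a1 * e powr a1) * decay b1"
    using pos by (intro mult_right_mono mult_left_mono) auto
  then have "c1 * norm (x0 - \<chi>0) powr a1 * decay b1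
      \<le> c1 * (2 * E) powr a1 * decay b1 + c1 * 2 powr a1 * e powr a1 * decay b1"
    by (simp add: algebra_simps)
  with e_term show ?thesis unfolding E_def W_def V_def by linarith
qed

lemma disturbance_terms_le:
  "\<alpha>1 (snorm_lt (\<lambda>i. w i - \<omega> i) t) + \<alpha>2 (snorm_le (\<lambda>i. h (traj f x0 w i) - h (traj f \<chi>0 \<omega> i)) t)
    \<le> \<alpha>1 (2 * snorm_lt w t) + \<alpha>2 (2 * snorm_le v t)
      + disturbance_gain (\<gamma>x' (norm (x0 - xbar0)) * decay b2)
      + disturbance_gain (\<gamma>w (snorm_lt w t)) + disturbance_gain (\<gamma>v (snorm_le v t))"
proof -
  define X W V where "X = \<gamma>x' (norm (x0 - xbar0)) * decay b2"
    and "W = \<gamma>w (snorm_lt w t)" and "V = \<gamma>v (snorm_le v t)"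
  have nonneg: "0 \<le> X" "0 \<le> W" "0 \<le> V"
    unfolding X_def W_def V_def using K_up by (auto simp: class_K_nonneg snorm_lt_nonneg snorm_le_nonneg)
  have split: "\<alpha> (a + Kinv g (X + W + V))
      \<le> \<alpha> (2 * a) + \<alpha> (2 * Kinv g (3 * X)) + \<alpha> (2 * Kinv g (3 * W)) + \<alpha> (2 * Kinv g (3 * V))"
    if \<alpha>: "class_K \<alpha>" and g: "class_Kinf g" and a: "0 \<le> a" for \<alpha> g a
  proof -
    have "\<alpha> (a + Kinv g (X + W + V)) \<le> \<alpha> (2 * a) + \<alpha> (2 * Kinv g (X + W + V))"
      using nonneg a Kinv(1)[OF g] by (intro class_K_add_le[OF \<alpha>]) auto
    moreover have "class_K (\<lambda>s. \<alpha> (2 * Kinv g s))"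
      by (intro class_K_compose[OF \<alpha>] class_K_cmult class_K_Kinv g) simp
    from class_K_add3_le[OF this nonneg]
    have "\<alpha> (2 * Kinv g (X + W + V))
        \<le> \<alpha> (2 * Kinv g (3 * X)) + \<alpha> (2 * Kinv g (3 * W)) + \<alpha> (2 * Kinv g (3 * V))" .
    ultimately show ?thesis by linarith
  qed
  have "\<alpha>1 (snorm_lt (\<lambda>i. w i - \<omega> i) t) \<le> \<alpha>1 (snorm_lt w t + Kinv \<gamma>w_low (X + W + V))"
    using input_error_le unfolding X_def W_def V_def by (intro class_K_mono[OF K_\<alpha>(1)] snorm_lt_nonneg)
  moreover have "\<alpha>2 (snorm_le (\<lambda>i. h (traj f x0 w i) - h (traj f \<chi>0 \<omega> i)) t)
      \<le> \<alpha>2 (snorm_le v t + Kinv \<gamma>v_low (X + W + V))"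
    using output_error_le unfolding X_def W_def V_def by (intro class_K_mono[OF K_\<alpha>(2)] snorm_le_nonneg)
  ultimately show ?thesis
    using split[OF K_\<alpha>(1) Kinf_low(1) snorm_lt_nonneg[of w t]]
      split[OF K_\<alpha>(2) Kinf_low(2) snorm_le_nonneg[of v t]]
    unfolding disturbance_gain_def X_def W_def V_def by linarith
qed

lemma estimation_error_le:
  "norm (traj f x0 w t - traj f \<chi>0 \<omega> t)
    \<le> state_gain (norm (x0 - xbar0)) (real t) + input_gain (snorm_lt w t) + noise_gain (snorm_le v t)"
  using ioss_bound[of x0 w t \<chi>0 \<omega>] initial_error_le disturbance_terms_le
  unfolding state_gain_def input_gain_def noise_gain_def by (simp add: algebra_simps)

end

end

theorem corollary2:
  fixes f :: "'x::euclidean_space \<Rightarrow> 'w::euclidean_space \<Rightarrow> 'x"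
    and h :: "'x \<Rightarrow> 'y::euclidean_space"
    and Bw :: "(nat \<Rightarrow> 'w) set" and Bv :: "(nat \<Rightarrow> 'y) set"
    and l_x :: "'x \<Rightarrow> real"
    and l_wv :: "(nat \<Rightarrow> 'w) \<Rightarrow> (nat \<Rightarrow> 'y) \<Rightarrow> nat \<Rightarrow> real"
    and c1 a1 b1 c2 a2 b2 :: real
    and \<gamma>w_low \<gamma>v_low \<gamma>x' \<gamma>w \<gamma>v :: "real \<Rightarrow> real"
  assumes f_cont: "continuous_on UNIV (\<lambda>p. f (fst p) (snd p))"
    and h_cont: "continuous_on UNIV h"
    and Bw_bdd: "\<forall>w\<in>Bw. bounded (range w)"
    and Bv_bdd: "\<forall>v\<in>Bv. bounded (range v)"
    and consts_pos: "c1 > 0" "a1 > 0" "b1 > 0" "c2 > 0" "a2 > 0" "b2 > 0"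
    and ioss: "i_IOSS f h (\<lambda>s t. c1 * s powr a1 * (t + 1) powr (- b1))"
    and K_inf: "class_Kinf \<gamma>w_low" "class_Kinf \<gamma>v_low" "class_Kinf \<gamma>x'"
               "class_Kinf \<gamma>w" "class_Kinf \<gamma>v"
    and lx_cont: "continuous_on UNIV l_x"
    and lwv_cont: "\<forall>t. continuous_on UNIV (\<lambda>p. l_wv (fst p) (snd p) t)"
    and lx_bounds: "\<forall>x. c2 * norm x powr a2 \<le> l_x x \<and> l_x x \<le> \<gamma>x' (norm x)"
    and lwv_bounds: "\<forall>w\<in>Bw. \<forall>v\<in>Bv. \<forall>t.
          \<gamma>w_low (snorm_lt w t) + \<gamma>v_low (snorm_le v t) \<le> l_wv w v t \<and>
          l_wv w v t \<le> \<gamma>w (snorm_lt w t) + \<gamma>v (snorm_le v t)"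
    and attained: "\<forall>x0 xbar0. \<forall>w\<in>Bw. \<forall>v\<in>Bv. \<forall>t. \<exists>\<chi>0 \<omega> \<nu>.
          FIE_opt f h Bw Bv (\<lambda>t e \<omega> \<nu>. l_x e * (real t + 1) powr (- b2) + l_wv \<omega> \<nu> t)
            xbar0 (\<lambda>i. h (traj f x0 w i) + v i) t \<chi>0 \<omega> \<nu>"
    and ratio: "a2 / b2 \<ge> a1 / b1"
  shows "\<forall>x0 xbar0. \<forall>w\<in>Bw. \<forall>v\<in>Bv. \<exists>\<beta>x \<alpha>w \<alpha>v.
           class_KL \<beta>x \<and> class_K \<alpha>w \<and> class_K \<alpha>v \<and>
           (\<forall>t \<chi>0 \<omega> \<nu>.
              FIE_opt f h Bw Bv (\<lambda>t e \<omega> \<nu>. l_x e * (real t + 1) powr (- b2) + l_wv \<omega> \<nu> t)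
                xbar0 (\<lambda>i. h (traj f x0 w i) + v i) t \<chi>0 \<omega> \<nu>
              \<longrightarrow> norm (traj f x0 w t - traj f \<chi>0 \<omega> t)
                    \<le> \<beta>x (norm (x0 - xbar0)) (real t) + \<alpha>w (snorm_lt w t) + \<alpha>v (snorm_le v t))"
proof (intro allI ballI)
  fix x0 xbar0 w v assume w: "w \<in> Bw" and v: "v \<in> Bv"
  from ioss obtain \<alpha>1 \<alpha>2 where "class_K \<alpha>1" "class_K \<alpha>2"
    and "\<And>x01 x02 w1 w2 t. norm (traj f x01 w1 t - traj f x02 w2 t)
           \<le> c1 * norm (x01 - x02) powr a1 * (real t + 1) powr (- b1)
             + \<alpha>1 (snorm_lt (\<lambda>i. w1 i - w2 i) t)
             + \<alpha>2 (snorm_le (\<lambda>i. h (traj f x01 w1 i) - h (traj f x02 w2 i)) t)"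
    unfolding i_IOSS_def by blast
  then interpret FIE_power_decay f h Bw Bv l_x l_wv c1 a1 b1 c2 a2 b2
      \<gamma>w_low \<gamma>v_low \<gamma>x' \<gamma>w \<gamma>v \<alpha>1 \<alpha>2
    using consts_pos ratio K_inf lx_bounds lwv_bounds
    by unfold_locales (auto simp: class_Kinf_def field_simps)
  show "\<exists>\<beta>x \<alpha>w \<alpha>v. class_KL \<beta>x \<and> class_K \<alpha>w \<and> class_K \<alpha>v \<and>
      (\<forall>t \<chi>0 \<omega> \<nu>. FIE_opt f h Bw Bv FIE_cost xbar0 (\<lambda>i. h (traj f x0 w i) + v i) t \<chi>0 \<omega> \<nu>
         \<longrightarrow> norm (traj f x0 w t - traj f \<chi>0 \<omega> t)
               \<le> \<beta>x (norm (x0 - xbar0)) (real t) + \<alpha>w (snorm_lt w t) + \<alpha>v (snorm_le v t))"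
    using class_KL_state_gain class_K_input_gain class_K_noise_gain estimation_error_le[OF w v]
    by blast
qed

end
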